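(* Let $p$ be a prime and let $L\in\mathbb{F}_p((X^{-1}))$ be irrational with continued fraction expansion $L=[A_0;A_1,A_2,\ldots]$ such that $K(L):=\sup_{d\ge1}\deg(A_d)<\infty$. Let $B\in\mathbb{F}_p[X]$ be nonzero with $\deg B=e$. Then the digital Kronecker sequence associated with $BL$ is a $(t,1)$-sequence in base $p$ with $t=K(L)+e-1$.
   Context: Elements of $\mathbb{F}_p$ are identified with $\{0,\ldots,p-1\}$. For $n=n_0+n_1p+\cdots$ in base $p$, $n(X)=n_0+n_1X+\cdots$. For $M=\sum_{i=w}^\infty a_iX^{-i}$, $\{M\}=\sum_{i\ge\max(1,w)}a_iX^{-i}$. The digital Kronecker sequence associated with $M$: writing $\{n(X)M\}=\sum_{i\ge1}c_iX^{-i}$, $x_n=\sum_{i\ge1}c_ip^{-i}$. Every irrational $L$ has a unique infinite continued fraction expansion $[A_0;A_1,\ldots]$ with $A_i\in\mathbb{F}_p[X]$, $\deg A_i\ge1$ for $i\ge1$. A $(t,m,1)$-net in base $p$ is a set of $p^m$ points in $[0,1)$ such that every interval $[a/p^{m-t},(a+1)/p^{m-t})$, $0\le a<p^{m-t}$, contains exactly $p^t$ points; a sequence $(x_n)_{n\ge0}$ in $[0,1)$ is a $(t,1)$-sequence in base $p$ if for all integers $m>t$ and $k\ge0$ the points $x_{kp^m},\ldots,x_{(k+1)p^m-1}$ form a $(t,m,1)$-net in base $p$. *)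

theory Defs
  imports "HOL-Analysis.Analysis" "HOL-Computational_Algebra.Computational_Algebra"
begin

text \<open>The field F_p is modelled by a finite field type 'a with CARD('a) = p, p prime.
  The Laurent series field F_p((X^{-1})) is modelled by the library type 'a fls, whose formal
  variable T stands for X^{-1}; thus M = sum_{i>=w} a_i X^{-i} is the fls with coefficient
  fls_nth M i = a_i.  A polynomial B(X) = sum_j b_j X^j embeds as the fls with coefficient b_j at index -j.\<close>

definition poly_fls :: "'a::zero poly \<Rightarrow> 'a fls" where
  "poly_fls B = Abs_fls (\<lambda>i. if i \<le> 0 then coeff B (nat (- i)) else 0)"

definition fls_frac :: "'a::zero fls \<Rightarrow> 'a fls" where
  "fls_frac M = Abs_fls (\<lambda>i. if 1 \<le> i then fls_nth M i else 0)"

definition fls_polypart :: "'a::zero fls \<Rightarrow> 'a poly" where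
  "fls_polypart M = Abs_poly (\<lambda>j. fls_nth M (- int j))"

definition fls_irrational :: "'a::field fls \<Rightarrow> bool" where
  "fls_irrational L \<longleftrightarrow> \<not> (\<exists>P Q. Q \<noteq> 0 \<and> L = poly_fls P / poly_fls Q)"

fun cf_rem :: "'a::field fls \<Rightarrow> nat \<Rightarrow> 'a fls" where
  "cf_rem L 0 = L"
| "cf_rem L (Suc k) = inverse (fls_frac (cf_rem L k))"

definition cf_digit :: "'a::field fls \<Rightarrow> nat \<Rightarrow> 'a poly" where
  "cf_digit L k = fls_polypart (cf_rem L k)"

definition fp_val :: "'a::{field,finite} \<Rightarrow> nat" where
  "fp_val c = (THE k. k < CARD('a) \<and> of_nat k = c)"

definition nat_poly :: "nat \<Rightarrow> 'a::{field,finite} poly" where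
  "nat_poly n = Poly (map (\<lambda>j. of_nat (n div CARD('a) ^ j mod CARD('a))) [0..<Suc n])"

definition kronecker_seq :: "'a::{field,finite} fls \<Rightarrow> nat \<Rightarrow> real" where
  "kronecker_seq M n =
     (\<Sum>i. real (fp_val (fls_nth (fls_frac (poly_fls (nat_poly n) * M)) (int (Suc i))))
             / real CARD('a) ^ Suc i)"

text \<open>(t,m,1)-net in base b for the points x_k, k in {k0..<k0+b^m} (counted with multiplicity).\<close>
definition is_tm1_net :: "nat \<Rightarrow> nat \<Rightarrow> nat \<Rightarrow> (nat \<Rightarrow> real) \<Rightarrow> nat set \<Rightarrow> bool" where
  "is_tm1_net b t m x I \<longleftrightarrow>
     card I = b ^ m \<and> (\<forall>k\<in>I. 0 \<le> x k \<and> x k < 1) \<and>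
     (\<forall>a < b ^ (m - t). card {k \<in> I. real a / real b ^ (m - t) \<le> x k \<and>
                                          x k < (real a + 1) / real b ^ (m - t)} = b ^ t)"

definition is_t1_seq :: "nat \<Rightarrow> nat \<Rightarrow> (nat \<Rightarrow> real) \<Rightarrow> bool" where
  "is_t1_seq b t x \<longleftrightarrow>
     (\<forall>m k. t < m \<longrightarrow> is_tm1_net b t m x {k * b ^ m ..< (k + 1) * b ^ m})"

end

theory Submission imports "HOL-Number_Theory.Residues" Defs begin

text \<open>The point \<open>x\<^sub>n\<close> lies in the \<open>a\<close>-th interval of length \<open>p\<^sup>-\<^sup>u\<close> iff the first \<open>u\<close> digits
  of \<open>{n(X) B L}\<close> spell out \<open>a\<close>. For \<open>n\<close> in a block \<open>[k p\<^sup>m, (k + 1) p\<^sup>m)\<close> we have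
  \<open>n(X) = X\<^sup>m k(X) + r(X)\<close> with \<open>r\<close> running through all polynomials of degree \<open>< m\<close>, and these
  digits depend \<open>F\<^sub>p\<close>-affinely on \<open>r\<close>; so every digit string is hit exactly \<open>p\<^sup>m\<^sup>-\<^sup>u\<close> times
  as soon as the linear map \<open>r \<mapsto> (digits 1..u)\<close> is onto. Surjectivity follows by triangularity
  from pivot polynomials of degree \<open>< m\<close> whose first nonzero digit sits at a prescribed position
  \<open>j \<le> u\<close>. These come from the continued fraction: bounded partial quotients give the Diophantine
  bound \<open>ord {Q L} \<le> deg Q + K\<close>, so a nonzero \<open>r\<close> of degree \<open>< j\<close> whose digits \<open>1..<j\<close>
  vanish (pigeonhole) has its first nonzero digit of \<open>{r B L}\<close> at a position
  \<open>\<le> deg r + deg B + K\<close>, and multiplying by a power of \<open>X\<close> moves it to \<open>j\<close> while keeping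
  the degree below \<open>m\<close> precisely because \<open>m - u \<ge> K + deg B - 1\<close>.\<close>

section \<open>Laurent series, polynomial and fractional parts\<close>

lemma poly_fls_nth: "fls_nth (poly_fls B) n = (if n \<le> 0 then coeff B (nat (- n)) else 0)"
proof -
  have "\<forall>\<^sub>\<infinity>k. coeff B k = 0" by (rule MOST_coeff_eq_0)
  then have "\<forall>\<^sub>\<infinity>k::nat. (if - int k \<le> 0 then coeff B (nat (- (- int k))) else 0) = 0"
    by simp
  then show ?thesis unfolding poly_fls_def by simp
qed

lemma fls_frac_nth: "fls_nth (fls_frac M) n = (if 1 \<le> n then fls_nth M n else 0)"
  unfolding fls_frac_def by (rule nth_Abs_fls_lower_bound[of 1]) auto

lemma coeff_fls_polypart: "coeff (fls_polypart M) j = fls_nth M (- int j)"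
proof -
  have "\<forall>\<^sub>\<infinity>j. fls_nth M (- int j) = 0" by (rule MOST_fls_neg_nth_eq_0)
  then show ?thesis unfolding fls_polypart_def by (simp add: Abs_poly_inverse)
qed

lemma poly_fls_0 [simp]: "poly_fls 0 = 0"
  by (rule fls_eqI) (simp add: poly_fls_nth)

lemma poly_fls_add: "poly_fls (P + Q) = poly_fls P + poly_fls Q"
  by (rule fls_eqI) (simp add: poly_fls_nth)

lemma poly_fls_diff: "poly_fls (P - Q) = poly_fls P - poly_fls (Q :: 'a::ring poly)"
  by (rule fls_eqI) (simp add: poly_fls_nth)

lemma poly_fls_smult: "poly_fls (smult a Q) = fls_const a * poly_fls (Q :: 'a::comm_ring_1 poly)"
  by (rule fls_eqI) (simp add: poly_fls_nth)

lemma poly_fls_pCons: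
  "poly_fls (pCons a Q) = fls_const a + fls_X_inv * poly_fls (Q :: 'a::comm_ring_1 poly)"
proof (rule fls_eqI)
  fix n :: int
  show "fls_nth (poly_fls (pCons a Q)) n = fls_nth (fls_const a + fls_X_inv * poly_fls Q) n"
  proof (cases "n < 0")
    case True
    then have "nat (- n) = Suc (nat (- (n + 1)))" by simp
    with True show ?thesis by (simp add: poly_fls_nth fls_X_inv_times_conv_shift coeff_pCons)
  qed (auto simp: poly_fls_nth fls_X_inv_times_conv_shift coeff_pCons)
qed

lemma poly_fls_mult: "poly_fls (P * Q) = poly_fls P * poly_fls (Q :: 'a::comm_ring_1 poly)"
proof (induction P)
  case (pCons a P)
  have "pCons a P * Q = smult a Q + pCons 0 (P * Q)" by simp
  then have "poly_fls (pCons a P * Q)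
      = fls_const a * poly_fls Q + fls_X_inv * (poly_fls P * poly_fls Q)"
    by (simp add: poly_fls_add poly_fls_smult poly_fls_pCons pCons.IH)
  also have "\<dots> = poly_fls (pCons a P) * poly_fls Q"
    by (simp add: poly_fls_pCons algebra_simps)
  finally show ?case .
qed simp

lemma poly_fls_eq_0_iff [simp]: "poly_fls P = 0 \<longleftrightarrow> P = 0"
proof
  assume "poly_fls P = 0"
  then have "coeff P j = 0" for j
    using poly_fls_nth[of P "- int j"] by simp
  then show "P = 0" by (simp add: poly_eq_iff)
qed simp

lemma fls_subdegree_poly_fls: "P \<noteq> 0 \<Longrightarrow> fls_subdegree (poly_fls P) = - int (degree P)"
  by (rule fls_subdegree_eqI) (auto simp: poly_fls_nth coeff_eq_0)

lemma poly_fls_monom_mult_nth: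
  "fls_nth (poly_fls (monom 1 a) * F) n = fls_nth (F :: 'a::comm_ring_1 fls) (n + int a)"
proof -
  have "poly_fls (monom 1 a) = fls_shift (int a) (1 :: 'a fls)"
    by (rule fls_eqI) (auto simp: poly_fls_nth coeff_monom)
  then show ?thesis by (simp add: fls_shifted_times_simps fls_mult_one)
qed

lemma fls_frac_0 [simp]: "fls_frac 0 = 0"
  by (rule fls_eqI) (simp add: fls_frac_nth)

lemma fls_frac_poly_fls [simp]: "fls_frac (poly_fls P) = 0"
  by (rule fls_eqI) (simp add: fls_frac_nth poly_fls_nth)

lemma fls_frac_add: "fls_frac (F + G) = fls_frac F + fls_frac G"
  by (rule fls_eqI) (simp add: fls_frac_nth)

lemma fls_frac_diff: "fls_frac (F - G) = fls_frac F - fls_frac (G :: 'a::ring fls)"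
  by (rule fls_eqI) (simp add: fls_frac_nth)

lemma fls_frac_const_mult: "fls_frac (fls_const c * F) = fls_const c * fls_frac (F :: 'a::ring fls)"
  by (rule fls_eqI) (simp add: fls_frac_nth)

lemma fls_polypart_plus_frac: "poly_fls (fls_polypart F) + fls_frac F = (F :: 'a::ring fls)"
  by (rule fls_eqI) (simp add: fls_frac_nth poly_fls_nth coeff_fls_polypart)

lemma fls_frac_poly_mult_frac:
  "fls_frac (poly_fls P * fls_frac F) = fls_frac (poly_fls P * (F :: 'a::comm_ring_1 fls))"
proof -
  have "poly_fls P * F = poly_fls (P * fls_polypart F) + poly_fls P * fls_frac F"
    by (subst (1) fls_polypart_plus_frac[of F, symmetric]) (simp add: poly_fls_mult algebra_simps)
  then show ?thesis by (simp add: fls_frac_add)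
qed

lemma fls_frac_eq_self: "1 \<le> fls_subdegree F \<Longrightarrow> fls_frac F = F"
  by (rule fls_eqI) (auto simp: fls_frac_nth)

lemma fls_subdegree_frac_ge: "fls_frac F \<noteq> 0 \<Longrightarrow> 1 \<le> fls_subdegree (fls_frac F)"
  by (rule fls_subdegree_geI) (auto simp: fls_frac_nth)

lemma degree_fls_polypart:
  assumes "F \<noteq> 0" "fls_subdegree F \<le> 0"
  shows "degree (fls_polypart F) = nat (- fls_subdegree F)"
proof (rule antisym)
  show "degree (fls_polypart F) \<le> nat (- fls_subdegree F)"
  proof (rule degree_le, intro allI impI)
    fix j assume "nat (- fls_subdegree F) < j"
    then have "- int j < fls_subdegree F" by linarith
    then show "coeff (fls_polypart F) j = 0" by (simp add: coeff_fls_polypart)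
  qed
  show "nat (- fls_subdegree F) \<le> degree (fls_polypart F)"
    by (rule le_degree) (use assms in \<open>simp add: coeff_fls_polypart\<close>)
qed

lemma fls_polypart_eq_0: "1 \<le> fls_subdegree F \<Longrightarrow> fls_polypart F = 0"
  by (simp add: poly_eq_iff coeff_fls_polypart)

lemma fls_irrational_poly_mult:
  assumes "fls_irrational L" "B \<noteq> 0"
  shows "fls_irrational (poly_fls B * L)"
  unfolding fls_irrational_def
proof
  assume "\<exists>P Q. Q \<noteq> 0 \<and> poly_fls B * L = poly_fls P / poly_fls Q"
  then obtain P Q where "Q \<noteq> 0" "poly_fls B * L = poly_fls P / poly_fls Q" by blast
  with assms(2) have "L = poly_fls P / poly_fls (Q * B)" "Q * B \<noteq> 0"
    by (simp_all add: poly_fls_mult field_simps)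
  with assms(1) show False unfolding fls_irrational_def by blast
qed

lemma fls_frac_poly_mult_neq_0:
  assumes "fls_irrational M" "Q \<noteq> 0"
  shows "fls_frac (poly_fls Q * M) \<noteq> 0"
proof
  assume "fls_frac (poly_fls Q * M) = 0"
  then have "poly_fls Q * M = poly_fls (fls_polypart (poly_fls Q * M))"
    using fls_polypart_plus_frac[of "poly_fls Q * M"] by simp
  with assms(2) have "M = poly_fls (fls_polypart (poly_fls Q * M)) / poly_fls Q"
    by (simp add: field_simps)
  with assms show False unfolding fls_irrational_def by blast
qed

section \<open>Bounded partial quotients give a Diophantine bound\<close>

lemma cf_rem_add: "cf_rem (cf_rem L j) d = cf_rem L (j + d)"
  by (induction d) auto

lemma cf_digit_inverse_frac: "cf_digit (inverse (fls_frac L)) d = cf_digit L (Suc d)"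
  using cf_rem_add[of L 1 d] by (simp add: cf_digit_def)

text \<open>One step of the continued fraction algorithm: with \<open>y = {L}\<close> of order \<open>a\<close>, a
  polynomial \<open>Q\<close> with \<open>{Q y}\<close> of order \<open>> a\<close> is traded for the polynomial part \<open>P\<close> of
  \<open>Q y\<close>, of degree \<open>deg Q - a\<close>, against the next complete quotient \<open>1/y\<close>.\<close>

lemma fls_frac_poly_mult_inverse:
  fixes y :: "'a::field fls"
  assumes y: "y \<noteq> 0" "1 \<le> fls_subdegree y" and Q: "Q \<noteq> 0"
    and order: "fls_subdegree y < fls_subdegree (fls_frac (poly_fls Q * y))"
  obtains P where "P \<noteq> 0" "int (degree P) = int (degree Q) - fls_subdegree y"
    "fls_frac (poly_fls P * inverse y) = - (fls_frac (poly_fls Q * y) * inverse y)"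
proof
  define f where "f = fls_frac (poly_fls Q * y)"
  define P where "P = fls_polypart (poly_fls Q * y)"
  have f: "f \<noteq> 0" using order y(2) by (auto simp: f_def)
  have "poly_fls Q = (poly_fls Q * y) * inverse y" using y(1) by simp
  also have "\<dots> = poly_fls P * inverse y + f * inverse y"
    unfolding P_def f_def by (subst (1) fls_polypart_plus_frac[symmetric]) (simp add: algebra_simps)
  finally have "fls_frac (poly_fls P * inverse y) = fls_frac (poly_fls Q - f * inverse y)"
    by (simp add: algebra_simps)
  also have "\<dots> = - (f * inverse y)"
  proof -
    have "fls_subdegree (f * inverse y) = fls_subdegree f - fls_subdegree y"
      using f y(1) by simp
    then have "fls_frac (f * inverse y) = f * inverse y"
      using order by (intro fls_frac_eq_self) (simp add: f_def)
    then show ?thesis by (simp add: fls_frac_diff)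
  qed
  finally show frac: "fls_frac (poly_fls P * inverse y) = - (fls_frac (poly_fls Q * y) * inverse y)"
    by (simp add: f_def)
  then show "P \<noteq> 0" using f y(1) by (auto simp: f_def)
  have order_Qy: "fls_subdegree (poly_fls Q * y) = - int (degree Q) + fls_subdegree y"
    using Q y(1) by (simp add: fls_subdegree_poly_fls)
  have "fls_subdegree (poly_fls Q * y) \<le> 0"
    using fls_polypart_eq_0[of "poly_fls Q * y"] \<open>P \<noteq> 0\<close> by (force simp: P_def)
  then show "int (degree P) = int (degree Q) - fls_subdegree y"
    using degree_fls_polypart[of "poly_fls Q * y"] order_Qy Q y(1) by (simp add: P_def)
qed

theorem fls_subdegree_frac_poly_mult_le:
  fixes L :: "'a::field fls"
  assumes "\<forall>d\<ge>1. degree (cf_digit L d) \<le> K" and "Q \<noteq> 0"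
  shows "fls_subdegree (fls_frac (poly_fls Q * L)) \<le> int (degree Q) + int K"
  using assms
proof (induction "degree Q" arbitrary: Q L rule: less_induct)
  case less
  define y where "y = fls_frac L"
  define f where "f = fls_frac (poly_fls Q * L)"
  have f_y: "f = fls_frac (poly_fls Q * y)"
    unfolding f_def y_def by (rule fls_frac_poly_mult_frac[symmetric])
  show ?case
  proof (cases "y = 0")
    case True
    then show ?thesis using f_y f_def by simp
  next
    case False
    define a where "a = fls_subdegree y"
    have a: "1 \<le> a" unfolding a_def y_def using False y_def fls_subdegree_frac_ge by blast
    have "int (degree (cf_digit L 1)) = a"
      using degree_fls_polypart[of "inverse y"] False a by (simp add: cf_digit_def y_def a_def)
    then have aK: "a \<le> int K" using less.prems(1) by force
    show ?thesis
    proof (cases "fls_subdegree f \<le> a")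
      case True
      then show ?thesis using aK f_def by auto
    next
      case False
      then obtain P where P: "P \<noteq> 0" "int (degree P) = int (degree Q) - a"
        "fls_frac (poly_fls P * inverse y) = - (f * inverse y)"
        using fls_frac_poly_mult_inverse[of y Q] \<open>y \<noteq> 0\<close> a less.prems(2)
        unfolding a_def f_y by (metis linorder_not_le)
      have "fls_subdegree (fls_frac (poly_fls P * inverse y)) \<le> int (degree P) + int K"
        using less.hyps[of P "inverse y"] less.prems(1) P(1,2) a
        by (simp add: y_def cf_digit_inverse_frac)
      moreover have "f \<noteq> 0" using False a by auto
      ultimately show ?thesis
        using P(2,3) \<open>y \<noteq> 0\<close> by (simp add: f_def a_def)
    qed
  qed
qed

section \<open>Base-\<open>p\<close> digits\<close>

lemma CHAR_eq_CARD:
  assumes "prime CARD('a::{field,finite})"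
  shows "CHAR('a) = CARD('a)"
proof -
  have "CHAR('a) dvd CARD('a)" by (rule CHAR_dvd_CARD)
  moreover have "CHAR('a) \<noteq> Suc 0" by simp
  ultimately show ?thesis using assms unfolding prime_nat_iff by (metis One_nat_def)
qed

lemma of_nat_eq_iff_CARD:
  assumes "prime CARD('a::{field,finite})" "i < CARD('a)" "j < CARD('a)"
  shows "(of_nat i :: 'a) = of_nat j \<longleftrightarrow> i = j"
  using assms of_nat_eq_iff_cong_CHAR[where 'a='a, of i j]
  by (simp add: CHAR_eq_CARD Cong.cong_def)

lemma fp_val:
  assumes "prime CARD('a::{field,finite})"
  shows "fp_val (c::'a) < CARD('a)" "of_nat (fp_val c) = c"
proof -
  have inj: "inj_on (of_nat :: nat \<Rightarrow> 'a) {..<CARD('a)}"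
    by (intro inj_onI) (use of_nat_eq_iff_CARD[OF assms] in auto)
  then have "(of_nat :: nat \<Rightarrow> 'a) ` {..<CARD('a)} = UNIV"
    by (simp add: card_image card_subset_eq)
  then obtain k where "k < CARD('a)" "(of_nat k :: 'a) = c"
    by (metis UNIV_I imageE lessThan_iff)
  then have "\<exists>!k. k < CARD('a) \<and> (of_nat k :: 'a) = c"
    using of_nat_eq_iff_CARD[OF assms] by blast
  then have "fp_val c < CARD('a) \<and> of_nat (fp_val c) = c"
    unfolding fp_val_def by (rule theI')
  then show "fp_val c < CARD('a)" "of_nat (fp_val c) = c" by auto
qed

lemma fp_val_eq_iff:
  assumes "prime CARD('a::{field,finite})" "k < CARD('a)"
  shows "fp_val (c::'a) = k \<longleftrightarrow> c = of_nat k"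
  using fp_val[OF assms(1), of c] of_nat_eq_iff_CARD[OF assms(1) _ assms(2)] by metis

lemma of_nat_CARD_minus_1:
  assumes "prime CARD('a::{field,finite})"
  shows "of_nat (CARD('a) - 1) = (-1 :: 'a)"
proof -
  have "(of_nat (CARD('a) - 1) :: 'a) + 1 = of_nat (CARD('a) - 1 + 1)"
    by simp
  also have "CARD('a) - 1 + 1 = CARD('a)"
    using prime_gt_0_nat[OF assms] by simp
  also have "(of_nat CARD('a) :: 'a) = 0" using CHAR_eq_CARD[OF assms] by (metis of_nat_CHAR)
  finally show ?thesis by (simp add: eq_neg_iff_add_eq_0)
qed

lemma mod_power_eq_sum_digits:
  "(n::nat) mod b ^ u = (\<Sum>j<u. (n div b ^ j mod b) * b ^ j)"
proof (induction u)
  case (Suc u)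
  have "n mod b ^ Suc u = b ^ u * (n div b ^ u mod b) + n mod b ^ u"
    unfolding power_Suc2 by (rule mod_mult2_eq)
  then show ?case using Suc.IH by simp
qed simp

lemma sum_digits_div_mod:
  assumes "\<forall>j<u. c j < (b::nat)" "i < u"
  shows "(\<Sum>j<u. c j * b ^ j) div b ^ i mod b = c i"
  using assms
proof (induction u arbitrary: c i)
  case (Suc u)
  have sum: "(\<Sum>j<Suc u. c j * b ^ j) = c 0 + b * (\<Sum>j<u. c (Suc j) * b ^ j)"
    unfolding sum.lessThan_Suc_shift sum_distrib_left by (simp add: mult.left_commute)
  have "c 0 < b" using Suc.prems(1) by simp
  show ?case
  proof (cases i)
    case 0
    then show ?thesis using \<open>c 0 < b\<close> unfolding sum by simp
  next
    case (Suc i')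
    from \<open>c 0 < b\<close> have "(\<Sum>j<Suc u. c j * b ^ j) div b = (\<Sum>j<u. c (Suc j) * b ^ j)"
      unfolding sum by simp
    then have "(\<Sum>j<Suc u. c j * b ^ j) div b ^ i = (\<Sum>j<u. c (Suc j) * b ^ j) div b ^ i'"
      by (simp only: Suc power_Suc div_mult2_eq)
    then show ?thesis using Suc.IH[of "\<lambda>j. c (Suc j)" i'] Suc.prems Suc by simp
  qed
qed simp

lemma sum_digits_eq_iff:
  assumes "\<forall>j<u. c j < (b::nat)" "a < b ^ u"
  shows "(\<Sum>j<u. c j * b ^ j) = a \<longleftrightarrow> (\<forall>j<u. c j = a div b ^ j mod b)"
proof
  show "\<forall>j<u. c j = a div b ^ j mod b" if "(\<Sum>j<u. c j * b ^ j) = a"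
    using sum_digits_div_mod[OF assms(1)] that by simp
  show "(\<Sum>j<u. c j * b ^ j) = a" if "\<forall>j<u. c j = a div b ^ j mod b"
  proof -
    have "(\<Sum>j<u. c j * b ^ j) = (\<Sum>j<u. (a div b ^ j mod b) * b ^ j)"
      using that by (intro sum.cong) simp_all
    also have "\<dots> = a" using mod_power_eq_sum_digits[of a b u] assms(2) by simp
    finally show ?thesis .
  qed
qed

lemma nat_eq_if_digits_eq:
  assumes "(n::nat) < b ^ u" "n' < b ^ u" "\<forall>j<u. n div b ^ j mod b = n' div b ^ j mod b"
  shows "n = n'"
proof -
  have "n mod b ^ u = n' mod b ^ u"
    unfolding mod_power_eq_sum_digits[of n] mod_power_eq_sum_digits[of n'] using assms(3) by simp
  then show ?thesis using assms(1,2) by simp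
qed

lemma coeff_nat_poly:
  assumes "prime CARD('a::{field,finite})"
  shows "coeff (nat_poly n :: 'a poly) j = of_nat (n div CARD('a) ^ j mod CARD('a))"
proof (cases "j < Suc n")
  case False
  have "(2::nat) ^ j \<le> CARD('a) ^ j" using prime_ge_2_nat[OF assms] by (rule power_mono) simp
  then have "n < CARD('a) ^ j" using False less_exp[of j] by linarith
  then show ?thesis using False by (simp del: upt_Suc add: nat_poly_def nth_default_def)
qed (simp del: upt_Suc add: nat_poly_def nth_default_def)

lemma inj_nat_poly:
  assumes "prime CARD('a::{field,finite})"
  shows "inj (nat_poly :: nat \<Rightarrow> 'a poly)"
proof (rule injI)
  fix n n' assume eq: "(nat_poly n :: 'a poly) = nat_poly n'"
  let ?p = "CARD('a)"
  have p: "2 \<le> ?p" using prime_ge_2_nat[OF assms] .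
  have bound: "x < ?p ^ (n + n')" if "x \<le> n + n'" for x
    using that less_exp[of "n + n'"] power_mono[OF p, of "n + n'"] by linarith
  have "n div ?p ^ j mod ?p = n' div ?p ^ j mod ?p" for j
    using arg_cong[OF eq, of "\<lambda>q. coeff q j"] p
    by (simp add: coeff_nat_poly[OF assms] of_nat_eq_iff_CARD[OF assms])
  then show "n = n'" by (intro nat_eq_if_digits_eq[of n ?p "n + n'" n']) (simp_all add: bound)
qed

lemma nat_poly_0 [simp]: "nat_poly 0 = 0"
  by (simp add: nat_poly_def)

definition polys_deg_less :: "nat \<Rightarrow> 'a::zero poly set" where
  "polys_deg_less m = {q. \<forall>j\<ge>m. coeff q j = 0}"

lemma zero_mem_polys_deg_less: "0 \<in> polys_deg_less m"
  by (simp add: polys_deg_less_def)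

lemma polys_deg_less_add: "P \<in> polys_deg_less m \<Longrightarrow> Q \<in> polys_deg_less m \<Longrightarrow> P + Q \<in> polys_deg_less m"
  by (simp add: polys_deg_less_def)

lemma polys_deg_less_diff:
  "P \<in> polys_deg_less m \<Longrightarrow> Q \<in> polys_deg_less m \<Longrightarrow> P - (Q :: 'a::ab_group_add poly) \<in> polys_deg_less m"
  by (simp add: polys_deg_less_def)

lemma polys_deg_less_smult: "P \<in> polys_deg_less m \<Longrightarrow> smult c P \<in> polys_deg_less m"
  by (simp add: polys_deg_less_def)

lemma degree_less_if_mem_polys_deg_less: "q \<in> polys_deg_less j \<Longrightarrow> 1 \<le> j \<Longrightarrow> degree q < j"
  using degree_le[of "j - 1" q] by (auto simp: polys_deg_less_def)

lemma bij_betw_coeffs_polys_deg_less: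
  "bij_betw (\<lambda>q. map (coeff q) [0..<m]) (polys_deg_less m) {xs. set xs \<subseteq> UNIV \<and> length xs = m}"
proof (rule bij_betw_byWitness[where f' = Poly])
  show "\<forall>q\<in>polys_deg_less m. Poly (map (coeff q) [0..<m]) = q"
    by (auto intro!: poly_eqI simp: polys_deg_less_def nth_default_def)
  show "\<forall>xs\<in>{xs. set xs \<subseteq> UNIV \<and> length xs = m}. map (coeff (Poly xs)) [0..<m] = xs"
    by (auto intro!: nth_equalityI simp: nth_default_def)
  show "Poly ` {xs. set xs \<subseteq> UNIV \<and> length xs = m} \<subseteq> polys_deg_less m"
    by (auto simp: polys_deg_less_def nth_default_def)
qed auto

lemma card_polys_deg_less: "card (polys_deg_less m :: 'a::{zero,finite} poly set) = CARD('a) ^ m"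
  and finite_polys_deg_less: "finite (polys_deg_less m :: 'a poly set)"
proof -
  have fin: "finite {xs :: 'a list. set xs \<subseteq> UNIV \<and> length xs = m}"
    by (rule finite_lists_length_eq) simp
  show "card (polys_deg_less m :: 'a poly set) = CARD('a) ^ m"
    using bij_betw_same_card[OF bij_betw_coeffs_polys_deg_less[where 'a='a, of m]]
      card_lists_length_eq[of "UNIV :: 'a set" m]
    by simp
  show "finite (polys_deg_less m :: 'a poly set)"
    using bij_betw_finite[OF bij_betw_coeffs_polys_deg_less[where 'a='a, of m]] fin by simp
qed

lemma bij_betw_nat_poly:
  assumes "prime CARD('a::{field,finite})"
  shows "bij_betw (nat_poly :: nat \<Rightarrow> 'a poly) {..<CARD('a) ^ m} (polys_deg_less m)"
proof (rule bij_betw_imageI)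
  show inj: "inj_on (nat_poly :: nat \<Rightarrow> 'a poly) {..<CARD('a) ^ m}"
    using inj_nat_poly[OF assms] by (rule inj_on_subset) simp
  have "r div CARD('a) ^ j = 0" if "r < CARD('a) ^ m" "m \<le> j" for r j
    using that power_increasing[OF that(2), of "CARD('a)"] prime_gt_0_nat[OF assms] by simp
  then have sub: "(nat_poly ` {..<CARD('a) ^ m} :: 'a poly set) \<subseteq> polys_deg_less m"
    by (auto simp: polys_deg_less_def coeff_nat_poly[OF assms])
  moreover have "card (nat_poly ` {..<CARD('a) ^ m} :: 'a poly set) = card (polys_deg_less m :: 'a poly set)"
    using card_image[OF inj] by (simp add: card_polys_deg_less)
  ultimately show "(nat_poly ` {..<CARD('a) ^ m} :: 'a poly set) = polys_deg_less m"
    by (simp add: card_subset_eq finite_polys_deg_less)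
qed

lemma nat_poly_mult_power_add:
  assumes "prime CARD('a::{field,finite})" "r < CARD('a) ^ m"
  shows "(nat_poly (k * CARD('a) ^ m + r) :: 'a poly) = monom 1 m * nat_poly k + nat_poly r"
proof (rule poly_eqI)
  fix j
  let ?p = "CARD('a)"
  have p: "0 < ?p" using prime_gt_0_nat[OF assms(1)] .
  show "coeff (nat_poly (k * ?p ^ m + r) :: 'a poly) j = coeff (monom 1 m * nat_poly k + nat_poly r) j"
  proof (cases "j < m")
    case True
    then obtain d where m: "m = j + Suc d" by (metis add_Suc_right less_imp_Suc_add)
    have split: "k * ?p ^ m + r = r + (k * ?p ^ d * ?p) * ?p ^ j"
      by (simp add: m power_add ac_simps)
    have "(k * ?p ^ m + r) div ?p ^ j mod ?p = (r div ?p ^ j + k * ?p ^ d * ?p) mod ?p"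
      unfolding split by (subst div_mult_self1) (use p in simp_all)
    then have "(k * ?p ^ m + r) div ?p ^ j mod ?p = r div ?p ^ j mod ?p"
      by simp
    then show ?thesis using True by (simp add: coeff_nat_poly[OF assms(1)] coeff_monom_mult)
  next
    case False
    then have "?p ^ j = ?p ^ m * ?p ^ (j - m)" by (simp flip: power_add)
    moreover have "r div ?p ^ j = 0"
      using False assms(2) power_increasing[of m j ?p] p by simp
    ultimately show ?thesis
      using False assms(2) p by (simp add: coeff_nat_poly[OF assms(1)] coeff_monom_mult div_mult2_eq)
  qed
qed

section \<open>The digits of \<open>{P M}\<close>\<close>

definition frac_digit :: "'a::comm_ring_1 fls \<Rightarrow> 'a poly \<Rightarrow> nat \<Rightarrow> 'a" where
  "frac_digit M P j = fls_nth (fls_frac (poly_fls P * M)) (int j)"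

lemma frac_digit_0 [simp]: "frac_digit M 0 j = 0"
  by (simp add: frac_digit_def)

lemma frac_digit_add: "frac_digit M (P + Q) j = frac_digit M P j + frac_digit M Q j"
  by (simp add: frac_digit_def poly_fls_add distrib_right fls_frac_add)

lemma frac_digit_diff: "frac_digit M (P - Q) j = frac_digit M P j - frac_digit M Q j"
  by (simp add: frac_digit_def poly_fls_diff left_diff_distrib fls_frac_diff)

lemma frac_digit_smult: "frac_digit M (smult c P) j = c * frac_digit M P j"
  by (simp add: frac_digit_def poly_fls_smult fls_frac_const_mult mult.assoc)

lemma frac_digit_monom_mult:
  assumes "1 \<le> j"
  shows "frac_digit M (monom 1 a * P) j = frac_digit M P (j + a)"
proof -
  have "fls_frac (poly_fls (monom 1 a * P) * M) = fls_frac (poly_fls (monom 1 a) * fls_frac (poly_fls P * M))"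
    by (simp add: poly_fls_mult mult.assoc fls_frac_poly_mult_frac)
  with assms show ?thesis
    by (simp add: frac_digit_def fls_frac_nth poly_fls_monom_mult_nth)
qed

text \<open>If the digits of \<open>G = {Q M}\<close> were eventually equal to \<open>c\<close>, then \<open>(X - 1) X\<^sup>N G\<close> would be a
  polynomial, making \<open>M\<close> rational.\<close>

lemma frac_digits_not_eventually_const:
  fixes M :: "'a::field fls"
  assumes "fls_irrational M" "Q \<noteq> 0"
  shows "\<exists>i\<ge>N. frac_digit M Q i \<noteq> c"
proof (rule ccontr)
  assume "\<not> (\<exists>i\<ge>N. frac_digit M Q i \<noteq> c)"
  then have const: "fls_nth (fls_frac (poly_fls Q * M)) (int i) = c" if "N \<le> i" for i
    using that by (auto simp: frac_digit_def)
  define R where "R = (monom 1 (N + 1) - monom 1 N :: 'a poly)"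
  have "R \<noteq> 0"
  proof
    assume "R = 0"
    then have "coeff R (N + 1) = 0" by simp
    then show False by (simp add: R_def coeff_monom)
  qed
  have "fls_frac (poly_fls R * fls_frac (poly_fls Q * M)) = 0"
  proof (rule fls_eqI)
    fix j :: int
    have "fls_nth (poly_fls R * fls_frac (poly_fls Q * M)) j = 0" if "1 \<le> j"
      using that const[of "nat (j + int (N + 1))"] const[of "nat (j + int N)"]
      by (simp add: R_def poly_fls_diff left_diff_distrib poly_fls_monom_mult_nth)
    then show "fls_nth (fls_frac (poly_fls R * fls_frac (poly_fls Q * M))) j = fls_nth 0 j"
      by (simp add: fls_frac_nth)
  qed
  then have "fls_frac (poly_fls (R * Q) * M) = 0"
    by (simp add: poly_fls_mult mult.assoc fls_frac_poly_mult_frac)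
  moreover have "R * Q \<noteq> 0" using \<open>R \<noteq> 0\<close> assms(2) by simp
  ultimately show False using fls_frac_poly_mult_neq_0[OF assms(1)] by blast
qed

section \<open>Prescribing the leading digits\<close>

lemma exists_poly_vanishing_frac_digits:
  fixes M :: "'a::{field,finite} fls"
  assumes "1 \<le> j"
  shows "\<exists>r\<in>polys_deg_less j. r \<noteq> 0 \<and> (\<forall>i\<in>{1..<j}. frac_digit M r i = 0)"
proof -
  define h where "h q = restrict (frac_digit M q) {1..<j}" for q
  have "card (UNIV :: 'a set) \<ge> card {0, 1 :: 'a}" by (rule card_mono) simp_all
  then have p: "2 \<le> CARD('a)" by simp
  have "h ` polys_deg_less j \<subseteq> (\<Pi>\<^sub>E i\<in>{1..<j}. (UNIV :: 'a set))" by (auto simp: h_def)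
  then have "card (h ` polys_deg_less j) \<le> card (\<Pi>\<^sub>E i\<in>{1..<j}. (UNIV :: 'a set))"
    by (intro card_mono finite_PiE) simp_all
  also have "\<dots> = CARD('a) ^ (j - 1)" by (simp add: card_PiE)
  also have "\<dots> < CARD('a) ^ j"
    using assms p by (intro power_strict_increasing) auto
  also have "\<dots> = card (polys_deg_less j :: 'a poly set)" by (simp add: card_polys_deg_less)
  finally have "\<not> inj_on h (polys_deg_less j)" using card_image by fastforce
  then obtain q1 q2 where q: "q1 \<in> polys_deg_less j" "q2 \<in> polys_deg_less j" "q1 \<noteq> q2" "h q1 = h q2"
    unfolding inj_on_def by blast
  have "frac_digit M (q1 - q2) i = 0" if "i \<in> {1..<j}" for i
    using fun_cong[OF q(4), of i] that by (simp add: h_def frac_digit_diff)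
  then show ?thesis using q by (intro bexI[of _ "q1 - q2"]) (auto intro: polys_deg_less_diff)
qed

lemma fls_subdegree_frac_ge_if_frac_digits_vanish:
  assumes "fls_frac (poly_fls r * M) \<noteq> 0" "\<forall>i\<in>{1..<j}. frac_digit M r i = 0"
  shows "int j \<le> fls_subdegree (fls_frac (poly_fls r * M))"
proof (rule fls_subdegree_geI[OF assms(1)])
  fix k :: int assume "k < int j"
  show "fls_nth (fls_frac (poly_fls r * M)) k = 0"
  proof (cases "1 \<le> k")
    case True
    then have "nat k \<in> {1..<j}" using \<open>k < int j\<close> by auto
    then have "fls_nth (fls_frac (poly_fls r * M)) (int (nat k)) = 0"
      using assms(2) by (simp only: frac_digit_def)
    then show ?thesis using True by simp
  qed (simp add: fls_frac_nth)
qed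

lemma exists_pivot_poly:
  fixes L :: "'a::{field,finite} fls"
  assumes irr: "fls_irrational L" and B: "B \<noteq> 0"
    and K: "\<forall>d\<ge>1. degree (cf_digit L d) \<le> K" and t: "K + degree B \<le> t + 1"
    and j: "1 \<le> j" "j \<le> u"
  shows "\<exists>q\<in>polys_deg_less (u + t). (\<forall>i\<in>{1..<j}. frac_digit (poly_fls B * L) q i = 0)
           \<and> frac_digit (poly_fls B * L) q j \<noteq> 0"
proof -
  define M where "M = poly_fls B * L"
  obtain r where r: "r \<in> polys_deg_less j" "r \<noteq> 0" "\<forall>i\<in>{1..<j}. frac_digit M r i = 0"
    using exists_poly_vanishing_frac_digits[OF j(1)] by blast
  define G where "G = fls_frac (poly_fls r * M)"
  have "G \<noteq> 0"
    unfolding G_def M_def using fls_frac_poly_mult_neq_0 fls_irrational_poly_mult irr B r(2) by blast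
  define s where "s = fls_subdegree G"
  have sj: "int j \<le> s"
    unfolding s_def G_def using r(3) \<open>G \<noteq> 0\<close> by (intro fls_subdegree_frac_ge_if_frac_digits_vanish) (simp_all add: G_def)
  have "s \<le> int (degree (r * B)) + int K"
    unfolding s_def G_def M_def using fls_subdegree_frac_poly_mult_le[OF K, of "r * B"] r(2) B
    by (simp add: poly_fls_mult ac_simps)
  then have s: "s \<le> int (degree r) + int (degree B) + int K"
    using r(2) B by (simp add: degree_mult_eq)
  define a where "a = nat (s - int j)"
  have "degree r < j" using degree_less_if_mem_polys_deg_less[OF r(1) j(1)] .
  then have "degree r + a < u + t" using s t j sj unfolding a_def by linarith
  then have "monom 1 a * r \<in> polys_deg_less (u + t)"
    by (auto simp: polys_deg_less_def coeff_monom_mult coeff_eq_0)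
  moreover have "frac_digit M (monom 1 a * r) i = fls_nth G (int (i + a))" if "1 \<le> i" for i
    unfolding frac_digit_monom_mult[OF that] by (simp add: frac_digit_def G_def)
  moreover have "fls_nth G (int (i + a)) = 0" if "i < j" for i
    using that sj unfolding a_def s_def by (intro fls_eq0_below_subdegree) linarith
  moreover have "fls_nth G (int (j + a)) \<noteq> 0"
    using sj \<open>G \<noteq> 0\<close> unfolding a_def s_def by simp
  ultimately show ?thesis unfolding M_def using j(1) by (intro bexI[of _ "monom 1 a * r"]) auto
qed

lemma frac_digits_surj:
  fixes M :: "'a::field fls"
  assumes pivot: "\<forall>j\<in>{1..u}. \<exists>q\<in>polys_deg_less m.
                    (\<forall>i\<in>{1..<j}. frac_digit M q i = 0) \<and> frac_digit M q j \<noteq> 0"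
  shows "\<exists>r\<in>polys_deg_less m. \<forall>i\<in>{1..u}. frac_digit M r i = w i"
proof -
  have "\<exists>r\<in>polys_deg_less m. \<forall>i\<in>{1..s}. frac_digit M r i = w i" if "s \<le> u" for s
    using that
  proof (induction s)
    case 0
    then show ?case using zero_mem_polys_deg_less by auto
  next
    case (Suc s)
    then obtain r where r: "r \<in> polys_deg_less m" "\<forall>i\<in>{1..s}. frac_digit M r i = w i" by auto
    have "Suc s \<in> {1..u}" using Suc.prems by simp
    then obtain q where q: "q \<in> polys_deg_less m" "\<forall>i\<in>{1..<Suc s}. frac_digit M q i = 0"
      "frac_digit M q (Suc s) \<noteq> 0"
      using pivot by blast
    define c where "c = (w (Suc s) - frac_digit M r (Suc s)) / frac_digit M q (Suc s)"
    have "frac_digit M (r + smult c q) i = w i" if "i \<in> {1..Suc s}" for i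
      using that r(2) q(2,3) by (cases "i = Suc s") (auto simp: frac_digit_add frac_digit_smult c_def)
    moreover have "r + smult c q \<in> polys_deg_less m"
      by (intro polys_deg_less_add polys_deg_less_smult r q)
    ultimately show ?case by blast
  qed
  then show ?thesis by blast
qed

lemma card_frac_digit_fibre_eq:
  fixes M :: "'a::field fls"
  assumes "\<rho>w \<in> polys_deg_less m" "\<forall>i\<in>{1..u}. frac_digit M \<rho>w i = w i"
  shows "card {\<rho>\<in>polys_deg_less m. \<forall>i\<in>{1..u}. frac_digit M \<rho> i = w i}
       = card {\<rho>\<in>polys_deg_less m. \<forall>i\<in>{1..u}. frac_digit M \<rho> i = 0}"
proof (rule bij_betw_same_card[symmetric], rule bij_betw_byWitness[where f' = "\<lambda>\<rho>. \<rho> - \<rho>w"])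
  show "(\<lambda>\<rho>. \<rho> + \<rho>w) ` {\<rho>\<in>polys_deg_less m. \<forall>i\<in>{1..u}. frac_digit M \<rho> i = 0}
      \<subseteq> {\<rho>\<in>polys_deg_less m. \<forall>i\<in>{1..u}. frac_digit M \<rho> i = w i}"
    using assms by (auto simp: frac_digit_add intro: polys_deg_less_add)
  show "(\<lambda>\<rho>. \<rho> - \<rho>w) ` {\<rho>\<in>polys_deg_less m. \<forall>i\<in>{1..u}. frac_digit M \<rho> i = w i}
      \<subseteq> {\<rho>\<in>polys_deg_less m. \<forall>i\<in>{1..u}. frac_digit M \<rho> i = 0}"
    using assms by (auto simp: frac_digit_diff intro: polys_deg_less_diff)
qed simp_all

lemma card_frac_digit_fibre:
  fixes M :: "'a::{field,finite} fls"
  assumes surj: "\<And>w. \<exists>r\<in>polys_deg_less m. \<forall>i\<in>{1..u}. frac_digit M r i = w i"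
  shows "card {\<rho>\<in>polys_deg_less m. \<forall>i\<in>{1..u}. frac_digit M \<rho> i = w i} * CARD('a) ^ u = CARD('a) ^ m"
proof -
  define fibre where "fibre w = {\<rho>\<in>polys_deg_less m. \<forall>i\<in>{1..u}. frac_digit M \<rho> i = w i}" for w
  have card_fibre: "card (fibre w) = card (fibre (\<lambda>_. 0))" for w
    using surj[of w] card_frac_digit_fibre_eq[of _ m u M w] by (auto simp: fibre_def)
  define W where "W = (\<Pi>\<^sub>E i\<in>{1..u}. (UNIV :: 'a set))"
  have "polys_deg_less m = (\<Union>w\<in>W. fibre w)"
  proof
    show "polys_deg_less m \<subseteq> (\<Union>w\<in>W. fibre w)"
    proof
      fix \<rho> :: "'a poly" assume "\<rho> \<in> polys_deg_less m"
      then have "\<rho> \<in> fibre (restrict (frac_digit M \<rho>) {1..u})" by (simp add: fibre_def)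
      then show "\<rho> \<in> (\<Union>w\<in>W. fibre w)" by (auto simp: W_def)
    qed
  qed (auto simp: fibre_def)
  then have "card (polys_deg_less m :: 'a poly set) = (\<Sum>w\<in>W. card (fibre w))"
  proof (simp only:, intro card_UN_disjoint ballI impI)
    show "finite W" by (simp add: W_def finite_PiE)
    show "finite (fibre w)" for w
      using finite_polys_deg_less by (rule finite_subset[rotated]) (auto simp: fibre_def)
    show "fibre w1 \<inter> fibre w2 = {}" if "w1 \<in> W" "w2 \<in> W" "w1 \<noteq> w2" for w1 w2
    proof -
      have "\<not> (\<forall>i\<in>{1..u}. w1 i = w2 i)"
        using that PiE_ext[of w1 "{1..u}" "\<lambda>_. UNIV" w2] by (auto simp: W_def)
      then obtain i where "i \<in> {1..u}" "w1 i \<noteq> w2 i" by blast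
      then show ?thesis by (auto simp: fibre_def)
    qed
  qed
  also have "\<dots> = (\<Sum>w\<in>W. card (fibre (\<lambda>_. 0)))"
    by (rule sum.cong[OF refl card_fibre])
  also have "\<dots> = CARD('a) ^ u * card (fibre (\<lambda>_. 0))"
    by (simp add: W_def card_PiE)
  finally have "CARD('a) ^ m = CARD('a) ^ u * card (fibre (\<lambda>_. 0))"
    by (simp only: card_polys_deg_less)
  then show ?thesis
    unfolding fibre_def[symmetric] card_fibre[of w] by (simp only: mult.commute)
qed

lemma card_block_nat_poly:
  fixes P :: "'a::{field,finite} poly \<Rightarrow> bool"
  assumes "prime CARD('a)"
  shows "card {n \<in> {k * CARD('a) ^ m..<(k + 1) * CARD('a) ^ m}. P (nat_poly n)}
       = card {\<rho>\<in>polys_deg_less m. P (monom 1 m * nat_poly k + \<rho>)}"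
proof -
  let ?p = "CARD('a)"
  let ?block = "{k * ?p ^ m..<(k + 1) * ?p ^ m}"
  have "bij_betw (\<lambda>n. n - k * ?p ^ m) ?block {..<?p ^ m}"
    by (rule bij_betw_byWitness[where f' = "\<lambda>r. r + k * ?p ^ m"]) auto
  from bij_betw_trans[OF this bij_betw_nat_poly[OF assms, of m]]
  have bij: "bij_betw ((nat_poly :: nat \<Rightarrow> 'a poly) \<circ> (\<lambda>n. n - k * ?p ^ m)) ?block (polys_deg_less m)" .
  have "(nat_poly n :: 'a poly) = monom 1 m * nat_poly k + (nat_poly \<circ> (\<lambda>n. n - k * ?p ^ m)) n"
    if "n \<in> ?block" for n
  proof -
    have "n - k * ?p ^ m < ?p ^ m" using that by (simp add: less_diff_conv2 algebra_simps)
    then show ?thesis using that nat_poly_mult_power_add[OF assms, of "n - k * ?p ^ m" m k] by simp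
  qed
  then have "bij_betw (nat_poly \<circ> (\<lambda>n. n - k * ?p ^ m))
      {n \<in> ?block. P (nat_poly n)} {\<rho>\<in>polys_deg_less m. P (monom 1 m * nat_poly k + \<rho>)}"
    by (intro bij_betw_Collect[OF bij]) simp
  then show ?thesis by (rule bij_betw_same_card)
qed

section \<open>The points of the digital Kronecker sequence\<close>

lemma digit_series_tail:
  fixes f :: "nat \<Rightarrow> nat"
  assumes b: "2 \<le> b" and digits: "\<And>i. f i < b" and not_max: "\<And>N. \<exists>i\<ge>N. f i < b - 1"
  shows "summable (\<lambda>i. real (f i) / real b ^ Suc i)"
    and "0 \<le> (\<Sum>n. real (f (n + u)) / real b ^ Suc (n + u))"
    and "(\<Sum>n. real (f (n + u)) / real b ^ Suc (n + u)) < 1 / real b ^ u"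
proof -
  define g where "g = (\<lambda>i. real (f i) / real b ^ Suc i)"
  define h where "h n = real (b - 1) / real b ^ Suc (n + u)" for n
  define c where "c = real (b - 1) / real b ^ Suc u"
  have b': "real b \<ge> 2" using b by simp
  have h_geometric: "h = (\<lambda>n. c * (1 / real b) ^ n)"
    by (simp add: fun_eq_iff h_def c_def power_add field_simps power_one_over)
  have geo: "summable (\<lambda>n. (1 / real b) ^ n)" using b' by (intro summable_geometric) simp
  then have h_summable: "summable h" unfolding h_geometric by (rule summable_mult)
  have "suminf h = c * (1 / (1 - 1 / real b))"
    unfolding h_geometric suminf_mult[OF geo] using b' by (simp add: suminf_geometric)
  also have "\<dots> = 1 / real b ^ u" using b b' by (simp add: c_def field_simps of_nat_diff)
  finally have h_sum: "suminf h = 1 / real b ^ u" .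
  have g_le_h: "g (n + u) \<le> h n" for n
    unfolding g_def h_def using digits[of "n + u"] b'
    by (intro divide_right_mono) (auto simp: of_nat_diff)
  have g_nonneg: "0 \<le> g n" for n by (simp add: g_def)
  have tail_summable: "summable (\<lambda>n. g (n + u))"
    by (rule summable_comparison_test'[OF h_summable]) (use g_le_h g_nonneg in auto)
  then have "summable g" by (simp only: summable_iff_shift)
  then show "summable (\<lambda>i. real (f i) / real b ^ Suc i)" by (simp add: g_def)
  show "0 \<le> (\<Sum>n. real (f (n + u)) / real b ^ Suc (n + u))"
    using suminf_nonneg[OF tail_summable] g_nonneg by (simp add: g_def)
  obtain i where i: "i \<ge> u" "f i < b - 1" using not_max[of u] by blast
  have "0 < (\<Sum>n. h n - g (n + u))"
  proof (subst suminf_pos_iff)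
    show "summable (\<lambda>n. h n - g (n + u))" by (intro summable_diff h_summable tail_summable)
    show "0 \<le> h n - g (n + u)" for n using g_le_h[of n] by simp
    have "g ((i - u) + u) < h (i - u)"
      unfolding g_def h_def using i b' by (intro divide_strict_right_mono) (auto simp: of_nat_diff)
    then show "\<exists>n. 0 < h n - g (n + u)" by (intro exI[of _ "i - u"]) simp
  qed
  also have "(\<Sum>n. h n - g (n + u)) = suminf h - (\<Sum>n. g (n + u))"
    by (rule suminf_diff[OF h_summable tail_summable, symmetric])
  finally show "(\<Sum>n. real (f (n + u)) / real b ^ Suc (n + u)) < 1 / real b ^ u"
    using h_sum by (simp add: g_def)
qed

text \<open>The last hypothesis rules out improper expansions ending in \<open>b - 1, b - 1, \<dots>\<close>, for which
  the right-hand side would be one too small.\<close>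

lemma floor_digit_series:
  fixes f :: "nat \<Rightarrow> nat"
  assumes b: "2 \<le> b" and digits: "\<And>i. f i < b" and not_max: "\<And>N. \<exists>i\<ge>N. f i < b - 1"
  shows "\<lfloor>(\<Sum>i. real (f i) / real b ^ Suc i) * real b ^ u\<rfloor> = int (\<Sum>j<u. f (u - Suc j) * b ^ j)"
proof -
  define g where "g = (\<lambda>i. real (f i) / real b ^ Suc i)"
  define T where "T = (\<Sum>n. g (n + u))"
  have summable: "summable g"
    using digit_series_tail(1)[OF b digits not_max] by (simp add: g_def)
  have tail: "0 \<le> T" "T < 1 / real b ^ u"
    using digit_series_tail(2,3)[OF b digits not_max, of u] by (simp_all add: T_def g_def)
  have "g i * real b ^ u = real (f i * b ^ (u - Suc i))" if "i < u" for i
  proof -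
    have "u = Suc i + (u - Suc i)" using that by simp
    then have "real b ^ u = real b ^ Suc i * real b ^ (u - Suc i)"
      by (metis power_add)
    then show ?thesis using b by (simp add: g_def)
  qed
  then have "(\<Sum>i<u. g i) * real b ^ u = real (\<Sum>i<u. f i * b ^ (u - Suc i))"
    by (simp add: sum_distrib_right)
  also have "(\<Sum>i<u. f i * b ^ (u - Suc i)) = (\<Sum>j<u. f (u - Suc j) * b ^ j)"
    using sum.nat_diff_reindex[of "\<lambda>j. f (u - Suc j) * b ^ j" u] by (simp add: Suc_diff_Suc)
  finally have "suminf g * real b ^ u = real (\<Sum>j<u. f (u - Suc j) * b ^ j) + T * real b ^ u"
    using suminf_split_initial_segment[OF summable, of u] by (simp add: T_def distrib_right)
  moreover have "0 \<le> T * real b ^ u" "T * real b ^ u < 1"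
    using tail b by (auto simp: field_simps)
  ultimately show ?thesis unfolding g_def by (intro floor_unique) auto
qed

lemma floor_kronecker_seq:
  fixes M :: "'a::{field,finite} fls"
  assumes prime: "prime CARD('a)" and irr: "fls_irrational M"
  shows "\<lfloor>kronecker_seq M n * real CARD('a) ^ u\<rfloor>
       = int (\<Sum>j<u. fp_val (frac_digit M (nat_poly n) (u - j)) * CARD('a) ^ j)"
proof -
  let ?p = "CARD('a)"
  define f where "f i = fp_val (frac_digit M (nat_poly n) (Suc i))" for i
  have digits: "f i < ?p" for i using fp_val(1)[OF prime] by (simp add: f_def)
  have not_max: "\<exists>i\<ge>N. f i < ?p - 1" for N
  proof -
    have "\<exists>i\<ge>Suc N. frac_digit M (nat_poly n) i \<noteq> -1"
    proof (cases "(nat_poly n :: 'a poly) = 0")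
      case False
      then show ?thesis by (rule frac_digits_not_eventually_const[OF irr])
    qed auto
    then obtain i where "i \<ge> N" "frac_digit M (nat_poly n) (Suc i) \<noteq> -1"
      by (metis Suc_le_D Suc_le_mono)
    moreover have "?p - 1 < ?p" using prime_gt_0_nat[OF prime] by simp
    from fp_val_eq_iff[OF prime this] have "fp_val c = ?p - 1 \<longleftrightarrow> c = -1" for c :: 'a
      unfolding of_nat_CARD_minus_1[OF prime] .
    with calculation(2) have "f i \<noteq> ?p - 1" by (simp add: f_def)
    with \<open>i \<ge> N\<close> show ?thesis using digits[of i] by (intro exI[of _ i]) simp
  qed
  have "kronecker_seq M n = (\<Sum>i. real (f i) / real ?p ^ Suc i)"
    by (simp add: kronecker_seq_def f_def frac_digit_def)
  also have "(\<Sum>j<u. f (u - Suc j) * ?p ^ j)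
      = (\<Sum>j<u. fp_val (frac_digit M (nat_poly n) (u - j)) * ?p ^ j)"
    by (intro sum.cong) (simp_all add: f_def Suc_diff_Suc)
  ultimately show ?thesis
    using floor_digit_series[OF prime_ge_2_nat[OF prime] digits not_max, of u] by simp
qed

lemma kronecker_seq_mem_interval_iff:
  fixes M :: "'a::{field,finite} fls"
  assumes prime: "prime CARD('a)" and irr: "fls_irrational M" and a: "a < CARD('a) ^ u"
  shows "real a / real CARD('a) ^ u \<le> kronecker_seq M n
           \<and> kronecker_seq M n < (real a + 1) / real CARD('a) ^ u
         \<longleftrightarrow> (\<forall>i\<in>{1..u}. frac_digit M (nat_poly n) i = of_nat (a div CARD('a) ^ (u - i) mod CARD('a)))"
    (is "?in_interval \<longleftrightarrow> _")
proof -
  let ?p = "CARD('a)"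
  let ?d = "\<lambda>i. frac_digit M (nat_poly n) i"
  have "?in_interval \<longleftrightarrow> real a \<le> kronecker_seq M n * real ?p ^ u \<and> kronecker_seq M n * real ?p ^ u < real a + 1"
    using prime_gt_0_nat[OF prime] by (simp add: divide_le_eq less_divide_eq)
  also have "\<dots> \<longleftrightarrow> \<lfloor>kronecker_seq M n * real ?p ^ u\<rfloor> = int a"
    by (simp add: floor_eq_iff)
  also have "\<dots> \<longleftrightarrow> (\<Sum>j<u. fp_val (?d (u - j)) * ?p ^ j) = a"
    unfolding floor_kronecker_seq[OF prime irr] of_nat_eq_iff ..
  also have "\<dots> \<longleftrightarrow> (\<forall>j<u. fp_val (?d (u - j)) = a div ?p ^ j mod ?p)"
    using fp_val(1)[OF prime] a by (intro sum_digits_eq_iff) auto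
  also have "\<dots> \<longleftrightarrow> (\<forall>j<u. ?d (u - j) = of_nat (a div ?p ^ j mod ?p))"
    using fp_val_eq_iff[OF prime] prime_gt_0_nat[OF prime] by simp
  also have "\<dots> \<longleftrightarrow> (\<forall>i\<in>{1..u}. ?d i = of_nat (a div ?p ^ (u - i) mod ?p))"
  proof
    show "\<forall>i\<in>{1..u}. ?d i = of_nat (a div ?p ^ (u - i) mod ?p)"
      if "\<forall>j<u. ?d (u - j) = of_nat (a div ?p ^ j mod ?p)"
    proof
      fix i assume "i \<in> {1..u}"
      then have "u - i < u" "u - (u - i) = i" by auto
      then show "?d i = of_nat (a div ?p ^ (u - i) mod ?p)" using that[rule_format, of "u - i"] by simp
    qed
  qed (auto dest: bspec[of _ _ "u - _"])
  finally show ?thesis .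
qed

theorem is_tm1_net_kronecker_seq:
  fixes M :: "'a::{field,finite} fls"
  assumes prime: "prime CARD('a)" and irr: "fls_irrational M"
    and pivot: "\<forall>j\<in>{1..u}. \<exists>q\<in>polys_deg_less (u + t).
                  (\<forall>i\<in>{1..<j}. frac_digit M q i = 0) \<and> frac_digit M q j \<noteq> 0"
  shows "is_tm1_net CARD('a) t (u + t) (kronecker_seq M)
           {k * CARD('a) ^ (u + t)..<(k + 1) * CARD('a) ^ (u + t)}"
  unfolding is_tm1_net_def
proof (intro conjI ballI allI impI)
  let ?p = "CARD('a)"
  let ?block = "{k * ?p ^ (u + t)..<(k + 1) * ?p ^ (u + t)}"
  show "card ?block = ?p ^ (u + t)" by simp
  fix n
  have "\<lfloor>kronecker_seq M n\<rfloor> = 0" using floor_kronecker_seq[OF prime irr, of n 0] by simp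
  then show "0 \<le> kronecker_seq M n" "kronecker_seq M n < 1" by linarith+
next
  let ?p = "CARD('a)"
  let ?block = "{k * ?p ^ (u + t)..<(k + 1) * ?p ^ (u + t)}"
  fix a assume "a < ?p ^ (u + t - t)"
  then have a: "a < ?p ^ u" by simp
  define w where "w i = (of_nat (a div ?p ^ (u - i) mod ?p) :: 'a)" for i
  define c where "c = (monom 1 (u + t) * nat_poly k :: 'a poly)"
  have "card {n \<in> ?block. real a / real ?p ^ (u + t - t) \<le> kronecker_seq M n
                          \<and> kronecker_seq M n < (real a + 1) / real ?p ^ (u + t - t)}
      = card {n \<in> ?block. \<forall>i\<in>{1..u}. frac_digit M (nat_poly n) i = w i}"
    using kronecker_seq_mem_interval_iff[OF prime irr a] by (simp add: w_def)
  also have "\<dots> = card {\<rho>\<in>polys_deg_less (u + t). \<forall>i\<in>{1..u}. frac_digit M (c + \<rho>) i = w i}"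
    unfolding c_def by (rule card_block_nat_poly[OF prime])
  also have "\<dots> = card {\<rho>\<in>polys_deg_less (u + t). \<forall>i\<in>{1..u}. frac_digit M \<rho> i = w i - frac_digit M c i}"
    by (simp add: frac_digit_add eq_diff_eq add.commute)
  also have "\<dots> = ?p ^ t"
    using card_frac_digit_fibre[OF frac_digits_surj[OF pivot], of "\<lambda>i. w i - frac_digit M c i"]
      prime_gt_0_nat[OF prime] by (simp add: power_add)
  finally show "card {n \<in> ?block. real a / real ?p ^ (u + t - t) \<le> kronecker_seq M n
                  \<and> kronecker_seq M n < (real a + 1) / real ?p ^ (u + t - t)} = ?p ^ t" .
qed

theorem proposition1:
  fixes L :: "'a::{field,finite} fls" and B :: "'a poly" and p :: nat
  assumes "CARD('a) = p" and "prime p"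
    and "fls_irrational L"
    and "bdd_above ((\<lambda>d. degree (cf_digit L d)) ` {1..})"
    and "B \<noteq> 0"
  shows "is_t1_seq p (Sup ((\<lambda>d. degree (cf_digit L d)) ` {1..}) + degree B - 1)
           (kronecker_seq (poly_fls B * L))"
  unfolding is_t1_seq_def
proof (intro allI impI)
  fix m k
  define K where "K = Sup ((\<lambda>d. degree (cf_digit L d)) ` {1..})"
  define t where "t = K + degree B - 1"
  assume "Sup ((\<lambda>d. degree (cf_digit L d)) ` {1..}) + degree B - 1 < m"
  then obtain u where m: "m = u + t" unfolding K_def t_def by (metis less_imp_add_positive add.commute)
  have K: "\<forall>d\<ge>1. degree (cf_digit L d) \<le> K"
    unfolding K_def using assms(4) by (auto intro: cSUP_upper)
  have "\<forall>j\<in>{1..u}. \<exists>q\<in>polys_deg_less (u + t). (\<forall>i\<in>{1..<j}. frac_digit (poly_fls B * L) q i = 0)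
          \<and> frac_digit (poly_fls B * L) q j \<noteq> 0"
    using exists_pivot_poly[OF assms(3,5) K] by (simp add: t_def)
  then show "is_tm1_net p (Sup ((\<lambda>d. degree (cf_digit L d)) ` {1..}) + degree B - 1) m
      (kronecker_seq (poly_fls B * L)) {k * p ^ m..<(k + 1) * p ^ m}"
    using is_tm1_net_kronecker_seq[OF _ fls_irrational_poly_mult[OF assms(3,5)]] assms(1,2)
    unfolding m t_def K_def by blast
qed

end
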